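(* Let $S$ be an independent set of $M$ and $F=\mathrm{cl}(S)$. If $G$ is a hyperplane of $M^\perp$ with $F\cup G\neq E$, then $F\cup G\cup P(S)\neq E$.
   Context: Let $M$ be a matroid with no loops and no coloops on the ground set $E=\{0,1,\dots,n\}$, totally ordered by the usual order of integers; $M^\perp$ its dual, $\mathrm{cl}$ the closure operator of $M$. For an independent set $S$ of $M$, $P(S)=\{e\in E-S:\ \text{there is a cocircuit } C^\perp \text{ of } M \text{ with } C^\perp\subseteq E-S \text{ and } e=\min C^\perp\}$; it is known that $S\sqcup P(S)$ is the lexicographically smallest basis of $M$ containing $S$. *)

theory Defs
  imports Main
begin

definition matroid :: "'a set \<Rightarrow> ('a set \<Rightarrow> bool) \<Rightarrow> bool" where
  "matroid E indep \<longleftrightarrow> finite E \<and> indep {} \<and>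
     (\<forall>X. indep X \<longrightarrow> X \<subseteq> E) \<and>
     (\<forall>X Y. indep Y \<and> X \<subseteq> Y \<longrightarrow> indep X) \<and>
     (\<forall>X Y. indep X \<and> indep Y \<and> card X < card Y \<longrightarrow> (\<exists>e\<in>Y - X. indep (insert e X)))"

definition basis :: "('a set \<Rightarrow> bool) \<Rightarrow> 'a set \<Rightarrow> bool" where
  "basis indep B \<longleftrightarrow> indep B \<and> (\<forall>X. indep X \<and> B \<subseteq> X \<longrightarrow> X = B)"

definition dual_indep :: "'a set \<Rightarrow> ('a set \<Rightarrow> bool) \<Rightarrow> 'a set \<Rightarrow> bool" where
  "dual_indep E indep X \<longleftrightarrow> X \<subseteq> E \<and> (\<exists>B. basis indep B \<and> X \<inter> B = {})"

definition circuit :: "'a set \<Rightarrow> ('a set \<Rightarrow> bool) \<Rightarrow> 'a set \<Rightarrow> bool" where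
  "circuit E indep C \<longleftrightarrow> C \<subseteq> E \<and> \<not> indep C \<and> (\<forall>X. X \<subset> C \<longrightarrow> indep X)"

definition cocircuit :: "'a set \<Rightarrow> ('a set \<Rightarrow> bool) \<Rightarrow> 'a set \<Rightarrow> bool" where
  "cocircuit E indep C \<longleftrightarrow> circuit E (dual_indep E indep) C"

definition mrank :: "('a set \<Rightarrow> bool) \<Rightarrow> 'a set \<Rightarrow> nat" where
  "mrank indep X = Max (card ` {Y. Y \<subseteq> X \<and> indep Y})"

definition mcl :: "'a set \<Rightarrow> ('a set \<Rightarrow> bool) \<Rightarrow> 'a set \<Rightarrow> 'a set" where
  "mcl E indep X = {e \<in> E. mrank indep (insert e X) = mrank indep X}"

definition flat :: "'a set \<Rightarrow> ('a set \<Rightarrow> bool) \<Rightarrow> 'a set \<Rightarrow> bool" where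
  "flat E indep F \<longleftrightarrow> F \<subseteq> E \<and> mcl E indep F = F"

definition hyperplane :: "'a set \<Rightarrow> ('a set \<Rightarrow> bool) \<Rightarrow> 'a set \<Rightarrow> bool" where
  "hyperplane E indep H \<longleftrightarrow> flat E indep H \<and> H \<noteq> E \<and>
     (\<forall>K. flat E indep K \<and> H \<subseteq> K \<longrightarrow> K = H \<or> K = E)"

definition loop :: "'a set \<Rightarrow> ('a set \<Rightarrow> bool) \<Rightarrow> 'a \<Rightarrow> bool" where
  "loop E indep e \<longleftrightarrow> e \<in> E \<and> \<not> indep {e}"

definition coloop :: "'a set \<Rightarrow> ('a set \<Rightarrow> bool) \<Rightarrow> 'a \<Rightarrow> bool" where
  "coloop E indep e \<longleftrightarrow> e \<in> E \<and> (\<forall>B. basis indep B \<longrightarrow> e \<in> B)"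

definition Pset :: "'a::linorder set \<Rightarrow> ('a set \<Rightarrow> bool) \<Rightarrow> 'a set \<Rightarrow> 'a set" where
  "Pset E indep S = {e \<in> E - S. \<exists>C. cocircuit E indep C \<and> C \<subseteq> E - S \<and> e = Min C}"

end

theory Submission
  imports Defs
begin

(* Suppose F \<union> G \<union> P(S) = E and let e be the largest element outside F \<union> G.  Then e \<in> P(S),
   so e = min D for a cocircuit D avoiding S, and hence avoiding F = cl(S).  Since G is a flat
   of the dual, some circuit C through e avoids G.  Every element of C \<inter> D lies outside F \<union> G,
   so it is at most e, and it is at least e as an element of D: thus C \<inter> D = {e}, which
   contradicts the fact that a circuit and a cocircuit never meet in exactly one element. *)

lemma matroid_finite: "matroid E indep \<Longrightarrow> finite E"
  by (simp add: matroid_def)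

lemma matroid_indep_empty: "matroid E indep \<Longrightarrow> indep {}"
  by (simp add: matroid_def)

lemma matroid_indep_subset_ground: "matroid E indep \<Longrightarrow> indep X \<Longrightarrow> X \<subseteq> E"
  by (simp add: matroid_def)

lemma matroid_indep_subset: "matroid E indep \<Longrightarrow> indep Y \<Longrightarrow> X \<subseteq> Y \<Longrightarrow> indep X"
  unfolding matroid_def by blast

lemma matroid_indep_finite: "matroid E indep \<Longrightarrow> indep X \<Longrightarrow> finite X"
  using matroid_finite matroid_indep_subset_ground finite_subset by metis

lemma matroid_augment:
  "matroid E indep \<Longrightarrow> indep X \<Longrightarrow> indep Y \<Longrightarrow> card X < card Y \<Longrightarrow> \<exists>e\<in>Y - X. indep (insert e X)"
  unfolding matroid_def by blast

lemma basis_indep: "basis indep B \<Longrightarrow> indep B"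
  by (simp add: basis_def)

lemma basis_subset_ground: "matroid E indep \<Longrightarrow> basis indep B \<Longrightarrow> B \<subseteq> E"
  using basis_indep matroid_indep_subset_ground by blast

lemma basis_exists:
  assumes M: "matroid E indep"
  shows "\<exists>B. basis indep B"
proof -
  have fin: "finite {X. indep X}"
    by (rule finite_subset[of _ "Pow E"])
      (use matroid_indep_subset_ground[OF M] matroid_finite[OF M] in auto)
  obtain B where "B \<in> {X. indep X}" "\<forall>X\<in>{X. indep X}. B \<subseteq> X \<longrightarrow> B = X"
    using finite_has_maximal2[OF fin, of "{}"] matroid_indep_empty[OF M] by auto
  then have "basis indep B" unfolding basis_def by auto
  then show ?thesis ..
qed

lemma basis_if_card_ge:
  assumes M: "matroid E indep" and B: "basis indep B" and J: "indep J" and le: "card B \<le> card J"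
  shows "basis indep J"
  unfolding basis_def
proof (intro conjI allI impI)
  fix X assume X: "indep X \<and> J \<subseteq> X"
  show "X = J"
  proof (rule ccontr)
    assume "X \<noteq> J"
    with X have "card J < card X"
      using matroid_indep_finite[OF M] by (metis psubsetI psubset_card_mono)
    then obtain x where "x \<in> X - B" "indep (insert x B)"
      using matroid_augment[OF M basis_indep[OF B]] X le by fastforce
    then show False using B unfolding basis_def by blast
  qed
qed (fact J)

lemma indep_extend_to_basis:
  assumes M: "matroid E indep" and I: "indep I" and B: "basis indep B"
  shows "\<exists>J. basis indep J \<and> I \<subseteq> J \<and> J \<subseteq> I \<union> B"
proof -
  define \<F> where "\<F> = {J. indep J \<and> I \<subseteq> J \<and> J \<subseteq> I \<union> B}"
  have "finite \<F>"
    unfolding \<F>_def by (rule finite_subset[of _ "Pow (I \<union> B)"])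
      (use matroid_indep_finite[OF M I] matroid_indep_finite[OF M basis_indep[OF B]] in auto)
  moreover have "I \<in> \<F>" using I unfolding \<F>_def by auto
  ultimately obtain J where J: "J \<in> \<F>" and max: "\<forall>X\<in>\<F>. J \<subseteq> X \<longrightarrow> J = X"
    using finite_has_maximal2[of \<F> I] by auto
  have "card B \<le> card J"
  proof (rule ccontr)
    assume "\<not> card B \<le> card J"
    then obtain x where "x \<in> B - J" "indep (insert x J)"
      using matroid_augment[OF M _ basis_indep[OF B]] J unfolding \<F>_def by fastforce
    moreover from this have "insert x J \<in> \<F>" using J unfolding \<F>_def by auto
    ultimately show False using max by blast
  qed
  then have "basis indep J" using basis_if_card_ge[OF M B] J unfolding \<F>_def by blast
  then show ?thesis using J unfolding \<F>_def by blast
qed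

lemma dependent_contains_circuit:
  assumes M: "matroid E indep" and X: "X \<subseteq> E" "\<not> indep X"
  shows "\<exists>C\<subseteq>X. circuit E indep C"
proof -
  have fin: "finite {Y. Y \<subseteq> X \<and> \<not> indep Y}"
    using finite_subset[OF X(1) matroid_finite[OF M]] by simp
  obtain C where C: "C \<subseteq> X" "\<not> indep C"
    and min: "\<forall>Y\<in>{Y. Y \<subseteq> X \<and> \<not> indep Y}. Y \<subseteq> C \<longrightarrow> C = Y"
    using finite_has_minimal2[OF fin, of X] X by auto
  have "circuit E indep C"
    unfolding circuit_def
  proof (intro conjI allI impI)
    show "C \<subseteq> E" using C(1) X(1) by blast
    fix Y assume "Y \<subset> C"
    then show "indep Y" using min C(1) by blast
  qed (fact C(2))
  with C show ?thesis by blast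
qed

lemma fundamental_circuit:
  assumes M: "matroid E indep" and B: "basis indep B" and e: "e \<in> E" "e \<notin> B"
  shows "\<exists>C. circuit E indep C \<and> e \<in> C \<and> C \<subseteq> insert e B"
proof -
  have "\<not> indep (insert e B)" using B e unfolding basis_def by blast
  moreover have "insert e B \<subseteq> E" using e basis_subset_ground[OF M B] by blast
  ultimately obtain C where C: "C \<subseteq> insert e B" "circuit E indep C"
    using dependent_contains_circuit[OF M] by blast
  have "e \<in> C"
  proof (rule ccontr)
    assume "e \<notin> C"
    with C(1) have "indep C" using matroid_indep_subset[OF M basis_indep[OF B]] by blast
    with C(2) show False unfolding circuit_def by blast
  qed
  with C show ?thesis by blast
qed

lemma circuit_delete_indep: "circuit E indep C \<Longrightarrow> d \<in> C \<Longrightarrow> indep (C - {d})"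
  unfolding circuit_def by blast

lemma dual_indep_empty: "matroid E indep \<Longrightarrow> dual_indep E indep {}"
  using basis_exists unfolding dual_indep_def by blast

lemma cocircuit_nonempty: "matroid E indep \<Longrightarrow> cocircuit E indep D \<Longrightarrow> D \<noteq> {}"
  using dual_indep_empty unfolding cocircuit_def circuit_def by blast

lemma cocircuit_disjoint_indep_insert:
  assumes M: "matroid E indep" and D: "cocircuit E indep D" "x \<in> D"
    and I: "indep I" "D \<inter> I = {}"
  shows "indep (insert x I)"
proof -
  have D': "D \<subseteq> E" "\<not> dual_indep E indep D" "\<And>X. X \<subset> D \<Longrightarrow> dual_indep E indep X"
    using D(1) unfolding cocircuit_def circuit_def by auto
  obtain B where B: "basis indep B" "(D - {x}) \<inter> B = {}"
    using D'(3)[of "D - {x}"] D(2) unfolding dual_indep_def by blast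
  obtain J where J: "basis indep J" "I \<subseteq> J" "J \<subseteq> I \<union> B"
    using indep_extend_to_basis[OF M I(1) B(1)] by blast
  have "x \<in> J"
  proof (rule ccontr)
    assume "x \<notin> J"
    then have "D \<inter> J = {}" using J B I(2) by blast
    with D'(1,2) J(1) show False unfolding dual_indep_def by blast
  qed
  with J show ?thesis using matroid_indep_subset[OF M basis_indep[OF J(1)]] by blast
qed

lemma circuit_cocircuit_Int_not_singleton:
  assumes M: "matroid E indep" and "circuit E indep C" "cocircuit E indep D"
  shows "C \<inter> D \<noteq> {e}"
proof
  assume CD: "C \<inter> D = {e}"
  then have "e \<in> C" "e \<in> D" "D \<inter> (C - {e}) = {}" by blast+
  then have "indep (insert e (C - {e}))"
    using cocircuit_disjoint_indep_insert[OF M assms(3)] circuit_delete_indep[OF assms(2)] by blast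
  moreover have "insert e (C - {e}) = C" using CD by blast
  ultimately show False using assms(2) unfolding circuit_def by simp
qed

lemma mrank_indep:
  assumes M: "matroid E indep" and I: "indep X"
  shows "mrank indep X = card X"
  unfolding mrank_def
proof (rule Max_eqI)
  have "finite X" using matroid_indep_finite[OF M I] .
  then show "finite (card ` {Y. Y \<subseteq> X \<and> indep Y})" by simp
  show "\<And>y. y \<in> card ` {Y. Y \<subseteq> X \<and> indep Y} \<Longrightarrow> y \<le> card X"
    using \<open>finite X\<close> card_mono by blast
qed (use I in blast)

lemma mcl_insert_dependent:
  assumes M: "matroid E indep" and S: "indep S" and x: "x \<in> mcl E indep S" "x \<notin> S"
  shows "\<not> indep (insert x S)"
proof
  assume "indep (insert x S)"
  then have "mrank indep (insert x S) = card S + 1"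
    using mrank_indep[OF M] matroid_indep_finite[OF M S] x(2) by simp
  moreover have "mrank indep (insert x S) = mrank indep S" using x(1) unfolding mcl_def by simp
  ultimately show False using mrank_indep[OF M S] by simp
qed

lemma cocircuit_disjoint_mcl:
  assumes M: "matroid E indep" and D: "cocircuit E indep D" and S: "indep S" "D \<inter> S = {}"
  shows "D \<inter> mcl E indep S = {}"
  using cocircuit_disjoint_indep_insert[OF M D _ S] mcl_insert_dependent[OF M S(1)] S(2) by blast

lemma mrank_insert_eqI:
  assumes X: "finite X" and empty: "indep {}"
    and exch: "\<And>Y. Y \<subseteq> insert e X \<Longrightarrow> indep Y \<Longrightarrow> \<exists>Y'\<subseteq>X. indep Y' \<and> card Y \<le> card Y'"
  shows "mrank indep (insert e X) = mrank indep X"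
proof -
  define ranks where "ranks A = card ` {Y. Y \<subseteq> A \<and> indep Y}" for A
  have fin: "finite (ranks A)" and ne: "ranks A \<noteq> {}" if "finite A" for A
    unfolding ranks_def using that empty by auto
  have "Max (ranks (insert e X)) \<le> Max (ranks X)"
  proof (rule Max.boundedI[OF fin ne])
    fix r assume "r \<in> ranks (insert e X)"
    then obtain Y where "Y \<subseteq> insert e X" "indep Y" "r = card Y" unfolding ranks_def by blast
    then obtain Y' where "Y' \<subseteq> X" "indep Y'" "r \<le> card Y'" using exch by blast
    then show "r \<le> Max (ranks X)"
      using Max_ge[OF fin[OF X], of "card Y'"] unfolding ranks_def by fastforce
  qed (use X in simp_all)
  moreover have "Max (ranks X) \<le> Max (ranks (insert e X))"
    using fin ne X unfolding ranks_def by (intro Max_mono) auto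
  ultimately show ?thesis unfolding mrank_def ranks_def by simp
qed

lemma dual_indep_exchange:
  assumes M: "matroid E indep" and Y: "Y \<subseteq> E" and B: "basis indep B" "Y \<inter> B = {}"
    and C: "circuit E indep C" "C \<subseteq> insert e B" and d: "d \<in> C"
  shows "dual_indep E indep (insert d (Y - {e}))"
proof -
  obtain J where J: "basis indep J" "C - {d} \<subseteq> J" "J \<subseteq> (C - {d}) \<union> B"
    using indep_extend_to_basis[OF M circuit_delete_indep[OF C(1) d] B(1)] by blast
  have "d \<notin> J"
  proof
    assume "d \<in> J"
    with J(2) have "C \<subseteq> J" by blast
    then have "indep C" using matroid_indep_subset[OF M basis_indep[OF J(1)]] by blast
    with C(1) show False unfolding circuit_def by blast
  qed
  moreover have "J \<subseteq> insert e B" using J(3) C(2) by blast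
  ultimately have "insert d (Y - {e}) \<inter> J = {}" using B(2) by blast
  moreover have "d \<in> E" using C d unfolding circuit_def by blast
  ultimately show ?thesis unfolding dual_indep_def using Y J(1) by blast
qed

lemma dual_flat_avoiding_circuit:
  assumes M: "matroid E indep" and G: "flat E (dual_indep E indep) G" and e: "e \<in> E" "e \<notin> G"
  shows "\<exists>C. circuit E indep C \<and> e \<in> C \<and> C \<inter> G = {}"
proof (rule ccontr)
  assume no_circuit: "\<not> ?thesis"
  (* Then e lies in the dual closure of G: the fundamental circuit of e with respect to a basis
     avoiding a coindependent Y \<ni> e meets G in some d, and d can replace e in Y. *)
  have GE: "G \<subseteq> E" using G unfolding flat_def by simp
  have exch: "\<exists>Y'\<subseteq>G. dual_indep E indep Y' \<and> card Y \<le> card Y'"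
    if Y: "Y \<subseteq> insert e G" "dual_indep E indep Y" for Y
  proof (cases "e \<in> Y")
    case False
    with Y show ?thesis by blast
  next
    case True
    obtain B where B: "basis indep B" "Y \<inter> B = {}" using Y(2) unfolding dual_indep_def by blast
    have YE: "Y \<subseteq> E" using Y(2) unfolding dual_indep_def by blast
    obtain C where C: "circuit E indep C" "e \<in> C" "C \<subseteq> insert e B"
      using fundamental_circuit[OF M B(1) e(1)] B(2) True by blast
    obtain d where d: "d \<in> C" "d \<in> G" using no_circuit C by blast
    have "d \<in> B" "d \<notin> Y" using d C(3) e(2) B(2) by auto
    moreover have "finite Y" using finite_subset[OF YE matroid_finite[OF M]] .
    ultimately have "card Y \<le> card (insert d (Y - {e}))"
      using True card.remove[of Y e] by simp
    moreover have "dual_indep E indep (insert d (Y - {e}))"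
      using dual_indep_exchange[OF M YE B C(1,3) d(1)] .
    moreover have "insert d (Y - {e}) \<subseteq> G" using Y(1) d(2) by blast
    ultimately show ?thesis by blast
  qed
  have "mrank (dual_indep E indep) (insert e G) = mrank (dual_indep E indep) G"
    by (rule mrank_insert_eqI[OF finite_subset[OF GE matroid_finite[OF M]] dual_indep_empty[OF M]
          exch])
  then have "e \<in> mcl E (dual_indep E indep) G" unfolding mcl_def using e(1) by simp
  with G e(2) show False unfolding flat_def by simp
qed

lemma mcl_Un_dual_flat_Un_Pset_neq:
  fixes E :: "'a::linorder set"
  assumes M: "matroid E indep" and S: "indep S" and G: "flat E (dual_indep E indep) G"
    and ne: "mcl E indep S \<union> G \<noteq> E"
  shows "mcl E indep S \<union> G \<union> Pset E indep S \<noteq> E"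
proof
  let ?F = "mcl E indep S"
  assume cover: "?F \<union> G \<union> Pset E indep S = E"
  define R where "R = E - (?F \<union> G)"
  have "?F \<subseteq> E" "G \<subseteq> E" using G unfolding mcl_def flat_def by auto
  then have "finite R" "R \<noteq> {}" using matroid_finite[OF M] ne unfolding R_def by auto
  define e where "e = Max R"
  have eR: "e \<in> R" and e_max: "\<And>c. c \<in> R \<Longrightarrow> c \<le> e"
    unfolding e_def using \<open>finite R\<close> \<open>R \<noteq> {}\<close> by simp_all
  have "e \<in> Pset E indep S" using eR cover unfolding R_def by blast
  then obtain D where D: "cocircuit E indep D" "D \<subseteq> E - S" "e = Min D"
    unfolding Pset_def by blast
  have "finite D" using D(2) matroid_finite[OF M] finite_subset by blast
  then have eD: "e \<in> D" and e_min: "\<And>d. d \<in> D \<Longrightarrow> e \<le> d"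
    using D(3) cocircuit_nonempty[OF M D(1)] by simp_all
  obtain C where C: "circuit E indep C" "e \<in> C" "C \<inter> G = {}"
    using dual_flat_avoiding_circuit[OF M G] eR unfolding R_def by blast
  have "D \<inter> ?F = {}" using cocircuit_disjoint_mcl[OF M D(1) S] D(2) by blast
  then have "C \<inter> D \<subseteq> R" using D(2) C(3) unfolding R_def by blast
  then have "C \<inter> D = {e}"
    using e_max e_min eD C(2) by (blast intro: antisym)
  then show False using circuit_cocircuit_Int_not_singleton[OF M C(1) D(1)] by blast
qed

theorem mainTheorem16:
  fixes n :: nat and indep :: "nat set \<Rightarrow> bool" and S G :: "nat set"
  assumes "matroid {0..n} indep"
    and "\<forall>e\<in>{0..n}. \<not> loop {0..n} indep e"
    and "\<forall>e\<in>{0..n}. \<not> coloop {0..n} indep e"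
    and "indep S"
    and "hyperplane {0..n} (dual_indep {0..n} indep) G"
    and "mcl {0..n} indep S \<union> G \<noteq> {0..n}"
  shows "mcl {0..n} indep S \<union> G \<union> Pset {0..n} indep S \<noteq> {0..n}"
  using mcl_Un_dual_flat_Un_Pset_neq[OF assms(1,4) _ assms(6)] assms(5)
  unfolding hyperplane_def by blast

end
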